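(* Let $\ell,n$ be positive integers with $2^\ell\le n$. If $A\subseteq\mathbb{Z}_{2^n}$ satisfies $|A|>(1-2^{-\ell})2^n$, then there exist $x,y\in\mathbb{Z}_{2^n}$ such that $\Sigma^*\{\underbrace{x,\dots,x}_{2^\ell-1},y\}\subseteq A$.
   Context: For a multiset $S=\{a_1,\dots,a_d\}$ of (not necessarily distinct) elements of $\mathbb{Z}_{2^n}$, $\Sigma^*S=\{\sum_{i\in I}a_i \bmod 2^n:\emptyset\ne I\subseteq[d]\}$. Thus $\Sigma^*\{x,\dots,x,y\}$ (with $2^\ell-1$ copies of $x$) equals $\{jx: 1\le j\le 2^\ell-1\}\cup\{y+jx: 0\le j\le 2^\ell-1\}$. *)

theory Defs
  imports Complex_Main
begin

text \<open>Elements of Z_(2^n) are represented by naturals in {..<2^n}.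
  A multiset S = {a_1,...,a_d} is represented by the list [a_1,...,a_d] (order irrelevant).
  sigma_star m xs is the set of all sums over nonempty index sets I of the entries, reduced mod m.\<close>

definition sigma_star :: "nat \<Rightarrow> nat list \<Rightarrow> nat set" where
  "sigma_star m xs = {(\<Sum>i\<in>I. xs ! i) mod m | I. I \<subseteq> {..<length xs} \<and> I \<noteq> {}}"

end

(* Let B be the complement of A, so that 2^l |B| < 2^n.  First pick an odd x with
   j x mod 2^n not in B for 0 < j < 2^l.  For a fixed b, a pair (j, x) with x odd and
   j x = b (mod 2^n) forces j to have the 2-adic valuation v of b, which leaves 2^(l-v-1)
   choices of j, and then determines x modulo 2^(n-v); so there are at most 2^(l-1) such
   pairs, and fewer than 2^(n-1) odd x are bad.  Then pick y with y + j x mod 2^n not in B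
   for all j < 2^l by a union bound over the 2^l translates of B.  As
   sigma_star {x, ..., x, y} = {j x | 0 < j < 2^l} \<union> {y + j x | j < 2^l}, it lies in A. *)

theory Submission
  imports Defs "HOL-Number_Theory.Cong" "HOL-Computational_Algebra.Factorial_Ring"
begin

lemma two_power_dvd_mod_mult_odd_iff:
  fixes j x :: nat
  assumes "odd x" "k \<le> n"
  shows "2 ^ k dvd (j * x) mod 2 ^ n \<longleftrightarrow> 2 ^ k dvd j"
proof -
  have "2 ^ k dvd (j * x) mod 2 ^ n \<longleftrightarrow> 2 ^ k dvd j * x"
    using assms(2) by (simp add: dvd_mod_iff le_imp_power_dvd)
  also have "\<dots> \<longleftrightarrow> 2 ^ k dvd j"
    using assms(1) by (simp add: coprime_dvd_mult_left_iff)
  finally show ?thesis .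
qed

lemma mod_two_power_mult_odd_cancel:
  fixes c x x' :: nat
  assumes "odd c" "(c * x) mod 2 ^ k = (c * x') mod 2 ^ k"
  shows "x mod 2 ^ k = x' mod 2 ^ k"
proof -
  have "coprime c (2 ^ k)" using assms(1) by simp
  then show ?thesis
    using assms(2) cong_mult_lcancel_nat unfolding cong_def by blast
qed

lemma mult_two_power_mod_two_power:
  fixes a :: nat
  assumes "v \<le> n"
  shows "(2 ^ v * a) mod 2 ^ n = 2 ^ v * (a mod 2 ^ (n - v))"
  using assms by (metis le_add_diff_inverse mod_mult_mult1 power_add)

lemma card_odd_less_double:
  "card {x :: nat. x < 2 * m \<and> odd x} = m"
proof -
  have "{x :: nat. x < 2 * m \<and> odd x} = (\<lambda>k. 2 * k + 1) ` {..<m}"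
    by (auto elim!: oddE)
  moreover have "inj (\<lambda>k :: nat. 2 * k + 1)" by (auto intro: injI)
  ultimately show ?thesis by (simp add: card_image inj_on_subset)
qed

definition mult_fiber :: "nat \<Rightarrow> nat \<Rightarrow> nat \<Rightarrow> (nat \<times> nat) set" where
  "mult_fiber l n b = {(j, x). j \<in> {1..<2 ^ l} \<and> x < 2 ^ n \<and> odd x \<and> (j * x) mod 2 ^ n = b}"

lemma finite_mult_fiber: "finite (mult_fiber l n b)"
  by (rule finite_subset[of _ "{..<2 ^ l} \<times> {..<2 ^ n}"]) (auto simp: mult_fiber_def)

lemma mult_fiber_zero:
  assumes "l \<le> n"
  shows "mult_fiber l n 0 = {}"
proof -
  have "(j, x) \<notin> mult_fiber l n 0" for j x
  proof
    assume "(j, x) \<in> mult_fiber l n 0"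
    then have j: "j \<in> {1..<2 ^ l}" and "odd x" "(j * x) mod 2 ^ n = 0"
      unfolding mult_fiber_def by auto
    then have "2 ^ n dvd j"
      using two_power_dvd_mod_mult_odd_iff[of x n n j] by simp
    moreover have "j < 2 ^ n"
      using j assms less_le_trans[OF _ power_increasing[of l n "2::nat"]] by simp
    ultimately show False
      using j by (simp add: nat_dvd_not_less)
  qed
  then show ?thesis by fast
qed

lemma mult_fiber_two_valuation:
  fixes b :: nat
  assumes "(j, x) \<in> mult_fiber l n (2 ^ v * b)" "odd b" "v < n"
  obtains c where "j = 2 ^ v * c" "odd c"
proof -
  have "odd x" "(j * x) mod 2 ^ n = 2 ^ v * b"
    using assms(1) unfolding mult_fiber_def by auto
  then have "2 ^ v dvd j"
    using assms(3) two_power_dvd_mod_mult_odd_iff[of x v n j] by simp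
  then obtain c where c: "j = 2 ^ v * c" by blast
  have "\<not> 2 ^ Suc v dvd (j * x) mod 2 ^ n"
    using \<open>(j * x) mod 2 ^ n = 2 ^ v * b\<close> assms(2) by simp
  then have "\<not> 2 ^ Suc v dvd j"
    using \<open>odd x\<close> assms(3) two_power_dvd_mod_mult_odd_iff[of x "Suc v" n j] by simp
  then have "odd c" using c by auto
  with c that show thesis by blast
qed

(* Writing j = 2^v c with c odd, c is recovered from c div 2, and x from its residue
   modulo 2^(n-v), which the congruence c x = b (mod 2^(n-v)) determines. *)
lemma inj_on_mult_fiber:
  fixes b :: nat
  assumes "odd b" "v < n"
  shows "inj_on (\<lambda>(j, x). (j div 2 ^ Suc v, x div 2 ^ (n - v))) (mult_fiber l n (2 ^ v * b))"
proof (rule inj_onI, clarify)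
  fix j x j' x'
  assume jx: "(j, x) \<in> mult_fiber l n (2 ^ v * b)" and jx': "(j', x') \<in> mult_fiber l n (2 ^ v * b)"
    and j: "j div 2 ^ Suc v = j' div 2 ^ Suc v" and x: "x div 2 ^ (n - v) = x' div 2 ^ (n - v)"
  obtain c c' where c: "j = 2 ^ v * c" "odd c" and c': "j' = 2 ^ v * c'" "odd c'"
    using mult_fiber_two_valuation[OF jx assms] mult_fiber_two_valuation[OF jx' assms] by metis
  have "c div 2 = c' div 2"
    using j c c' by (simp add: power_Suc2 div_mult_mult1)
  then have "c = c'"
    using c c' by (metis odd_two_times_div_two_succ)
  have "2 ^ v * ((c * x) mod 2 ^ (n - v)) = (j * x) mod 2 ^ n"
       "2 ^ v * ((c * x') mod 2 ^ (n - v)) = (j' * x') mod 2 ^ n"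
    using c(1) c'(1) \<open>c = c'\<close> assms(2)
    by (simp_all add: mult_two_power_mod_two_power mult.assoc)
  moreover have "(j * x) mod 2 ^ n = (j' * x') mod 2 ^ n"
    using jx jx' unfolding mult_fiber_def by simp
  ultimately have "2 ^ v * ((c * x) mod 2 ^ (n - v)) = 2 ^ v * ((c * x') mod 2 ^ (n - v))"
    by simp
  then have "(c * x) mod 2 ^ (n - v) = (c * x') mod 2 ^ (n - v)"
    by simp
  then have "x mod 2 ^ (n - v) = x' mod 2 ^ (n - v)"
    by (rule mod_two_power_mult_odd_cancel[OF c(2)])
  with x have "x = x'"
    by (metis div_mult_mod_eq)
  with c c' \<open>c = c'\<close> show "j = j' \<and> x = x'"
    by simp
qed

lemma mult_fiber_image_subset:
  assumes "v < l" "v < n"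
  shows "(\<lambda>(j, x). (j div 2 ^ Suc v, x div 2 ^ (n - v))) ` mult_fiber l n b
           \<subseteq> {..<2 ^ (l - Suc v)} \<times> {..<2 ^ v}"
proof -
  have split: "(2::nat) ^ l = 2 ^ Suc v * 2 ^ (l - Suc v)" "(2::nat) ^ n = 2 ^ (n - v) * 2 ^ v"
    using assms by (metis Suc_leI le_add_diff_inverse le_add_diff_inverse2 less_imp_le power_add)+
  have "j div 2 ^ Suc v < 2 ^ (l - Suc v) \<and> x div 2 ^ (n - v) < 2 ^ v"
    if "(j, x) \<in> mult_fiber l n b" for j x
  proof -
    have "j < 2 ^ Suc v * 2 ^ (l - Suc v)" "x < 2 ^ (n - v) * 2 ^ v"
      using that split unfolding mult_fiber_def by auto
    then show ?thesis
      by (simp add: less_mult_imp_div_less mult.commute)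
  qed
  then show ?thesis
    by auto
qed

lemma card_mult_fiber_le:
  assumes "b < 2 ^ n" "l \<le> n"
  shows "card (mult_fiber l n b) \<le> 2 ^ (l - 1)"
proof (cases "b = 0")
  case True
  then show ?thesis
    using mult_fiber_zero[OF assms(2)] by simp
next
  case False
  define v where "v = multiplicity 2 b"
  obtain b' where b: "b = 2 ^ v * b'" "odd b'"
    using multiplicity_decompose'[of b 2] False unfolding v_def by auto
  then have "(2::nat) ^ v \<le> b"
    by (simp add: Suc_leI odd_pos)
  then have "v < n"
    using assms(1) by (metis le_less_trans power_less_imp_less_exp one_less_numeral_iff
        semiring_norm(76))
  show ?thesis
  proof (cases "mult_fiber l n b = {}")
    case False
    then obtain j x where jx: "(j, x) \<in> mult_fiber l n b"
      by auto
    then obtain c where "j = 2 ^ v * c" "odd c"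
      using mult_fiber_two_valuation[of j x l n v b'] b \<open>v < n\<close> by blast
    then have "2 ^ v \<le> j"
      by (simp add: Suc_leI odd_pos)
    moreover have "j < 2 ^ l"
      using jx unfolding mult_fiber_def by simp
    ultimately have "(2::nat) ^ v < 2 ^ l"
      by linarith
    then have "v < l"
      by simp
    have "card (mult_fiber l n b) \<le> card ({..<(2::nat) ^ (l - Suc v)} \<times> {..<(2::nat) ^ v})"
      using inj_on_mult_fiber[OF b(2) \<open>v < n\<close>] mult_fiber_image_subset[OF \<open>v < l\<close> \<open>v < n\<close>]
        b(1) by (intro card_inj_on_le) simp_all
    also have "\<dots> = 2 ^ (l - Suc v + v)"
      by (simp add: power_add)
    also have "\<dots> = 2 ^ (l - 1)"
      using \<open>v < l\<close> by (simp add: Suc_diff_Suc)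
    finally show ?thesis .
  qed simp
qed

lemma exists_odd_multiplier_avoiding:
  fixes l n :: nat and B :: "nat set"
  assumes "0 < l" "l \<le> n" "B \<subseteq> {..<2 ^ n}" "2 ^ l * card B < 2 ^ n"
  shows "\<exists>x < 2 ^ n. odd x \<and> (\<forall>j \<in> {1..<2 ^ l}. (j * x) mod 2 ^ n \<notin> B)"
proof (rule ccontr)
  assume no: "\<not> ?thesis"
  have "finite B"
    using assms(3) finite_subset by blast
  have bad: "{x. x < 2 ^ n \<and> odd x} \<subseteq> snd ` (\<Union>b\<in>B. mult_fiber l n b)"
  proof
    fix x :: nat assume "x \<in> {x. x < 2 ^ n \<and> odd x}"
    with no obtain j where "j \<in> {1..<2 ^ l}" "(j * x) mod 2 ^ n \<in> B" "x < 2 ^ n" "odd x"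
      by auto
    then have "(j, x) \<in> (\<Union>b\<in>B. mult_fiber l n b)"
      unfolding mult_fiber_def by blast
    then show "x \<in> snd ` (\<Union>b\<in>B. mult_fiber l n b)"
      by force
  qed
  have two_pow_pred: "(2::nat) ^ m = 2 * 2 ^ (m - 1)" if "0 < m" for m
    using that by (simp flip: power_Suc)
  have "2 ^ (n - 1) = card {x :: nat. x < 2 ^ n \<and> odd x}"
    using card_odd_less_double[of "2 ^ (n - 1)"] two_pow_pred[of n] assms(1,2) by simp
  also have "\<dots> \<le> card (snd ` (\<Union>b\<in>B. mult_fiber l n b))"
    using bad \<open>finite B\<close> by (intro card_mono) (auto simp: finite_mult_fiber)
  also have "\<dots> \<le> card (\<Union>b\<in>B. mult_fiber l n b)"
    using \<open>finite B\<close> by (intro card_image_le) (auto simp: finite_mult_fiber)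
  also have "\<dots> \<le> (\<Sum>b\<in>B. card (mult_fiber l n b))"
    by (rule card_UN_le[OF \<open>finite B\<close>])
  also have "\<dots> \<le> (\<Sum>b\<in>B. 2 ^ (l - 1))"
    using assms(2,3) by (intro sum_mono card_mult_fiber_le) auto
  finally have "2 ^ (n - 1) \<le> card B * 2 ^ (l - 1)"
    by simp
  then have "2 ^ n \<le> 2 ^ l * card B"
    using two_pow_pred[of n] two_pow_pred[of l] assms(1,2) by (simp add: mult.commute)
  with assms(4) show False
    by simp
qed

lemma exists_shift_avoiding:
  fixes N L :: nat and s :: "nat \<Rightarrow> nat" and B :: "nat set"
  assumes "finite B" "L * card B < N"
  shows "\<exists>y < N. \<forall>j < L. (y + s j) mod N \<notin> B"
proof (rule ccontr)
  assume no: "\<not> ?thesis"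
  define g where "g = (\<lambda>(j, b). nat ((int b - int (s j)) mod int N))"
  have "{..<N} \<subseteq> g ` ({..<L} \<times> B)"
  proof
    fix y assume "y \<in> {..<N}"
    with no obtain j where j: "j < L" "(y + s j) mod N \<in> B" by auto
    have "(int ((y + s j) mod N) - int (s j)) mod int N = (int y + int (s j) - int (s j)) mod int N"
      by (simp add: zmod_int mod_diff_left_eq)
    then have "g (j, (y + s j) mod N) = y"
      using \<open>y \<in> {..<N}\<close> unfolding g_def by simp
    with j show "y \<in> g ` ({..<L} \<times> B)" by force
  qed
  then have "N \<le> card (g ` ({..<L} \<times> B))"
    using assms(1) by (metis card_lessThan card_mono finite_SigmaI finite_imageI finite_lessThan)
  also have "\<dots> \<le> L * card B"
    using card_image_le[of "{..<L} \<times> B" g] assms(1) by (simp add: card_cartesian_product)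
  finally show False using assms(2) by simp
qed

lemma sum_nth_replicate_snoc:
  fixes x y :: nat
  assumes "I \<subseteq> {..k}"
  shows "(\<Sum>i\<in>I. (replicate k x @ [y]) ! i) = (if k \<in> I then y else 0) + card (I - {k}) * x"
proof -
  have "finite I"
    using assms finite_subset by blast
  have "(\<Sum>i\<in>I. (replicate k x @ [y]) ! i) = (\<Sum>i\<in>I. if i = k then y else x)"
    using assms by (intro sum.cong) (auto simp: nth_append)
  also have "\<dots> = (\<Sum>i\<in>I \<inter> {k}. y) + (\<Sum>i\<in>I - {k}. x)"
    using \<open>finite I\<close> by (simp add: sum.If_cases Diff_eq)
  also have "\<dots> = (if k \<in> I then y else 0) + card (I - {k}) * x"
    by auto
  finally show ?thesis .
qed

lemma sigma_star_replicate_snoc: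
  fixes N k x y :: nat
  shows "sigma_star N (replicate k x @ [y]) =
           {(j * x) mod N | j. 1 \<le> j \<and> j \<le> k} \<union> {(y + j * x) mod N | j. j \<le> k}"
proof -
  have len: "{..<length (replicate k x @ [y])} = {..k}"
    by auto
  have "(\<Sum>i\<in>I. (replicate k x @ [y]) ! i) mod N \<in>
          {(j * x) mod N | j. 1 \<le> j \<and> j \<le> k} \<union> {(y + j * x) mod N | j. j \<le> k}"
    if I: "I \<subseteq> {..k}" "I \<noteq> {}" for I
  proof (cases "k \<in> I")
    case True
    have "card (I - {k}) \<le> card {..<k}"
      using I(1) by (intro card_mono) auto
    then show ?thesis
      using True sum_nth_replicate_snoc[OF I(1)] by auto
  next
    case False
    then have "I \<subseteq> {..<k}"
      using I(1) by (auto simp: subset_iff le_less)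
    then have "card I \<le> k" "1 \<le> card I"
      using I(2) card_mono[of "{..<k}" I] finite_subset[of I "{..<k}"]
      by (auto simp: Suc_le_eq card_gt_0_iff)
    then show ?thesis
      using False sum_nth_replicate_snoc[OF I(1)] by auto
  qed
  moreover have "(j * x) mod N \<in> sigma_star N (replicate k x @ [y])" if "1 \<le> j" "j \<le> k" for j
  proof -
    have "{..<j} \<subseteq> {..k}" "k \<notin> {..<j}"
      using that by auto
    then have "(\<Sum>i\<in>{..<j}. (replicate k x @ [y]) ! i) = j * x"
      using sum_nth_replicate_snoc[of "{..<j}" k x y] by simp
    then show ?thesis
      using that unfolding sigma_star_def len by (intro CollectI exI[of _ "{..<j}"])
        (auto simp: lessThan_empty_iff)
  qed
  moreover have "(y + j * x) mod N \<in> sigma_star N (replicate k x @ [y])" if "j \<le> k" for j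
  proof -
    have "insert k {..<j} \<subseteq> {..k}" "insert k {..<j} - {k} = {..<j}"
      using that by auto
    then have "(\<Sum>i\<in>insert k {..<j}. (replicate k x @ [y]) ! i) = y + j * x"
      using sum_nth_replicate_snoc[of "insert k {..<j}" k x y] by (simp del: sum.insert)
    then show ?thesis
      using that unfolding sigma_star_def len by (intro CollectI exI[of _ "insert k {..<j}"]) auto
  qed
  ultimately show ?thesis
    unfolding sigma_star_def len by blast
qed

lemma card_complement_less_of_dense:
  fixes A :: "nat set" and N l :: nat
  assumes "A \<subseteq> {..<N}" "real (card A) > (1 - 1 / 2 ^ l) * N"
  shows "2 ^ l * card ({..<N} - A) < N"
proof -
  have "finite A"
    using assms(1) finite_subset by blast
  then have "card ({..<N} - A) = N - card A" "card A \<le> N"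
    using assms(1) card_Diff_subset[of A "{..<N}"] card_mono[of "{..<N}" A] by simp_all
  then have "real (card ({..<N} - A)) = N - real (card A)"
    by simp
  also have "\<dots> < N / 2 ^ l"
    using assms(2) by (simp add: algebra_simps)
  finally have "real (2 ^ l * card ({..<N} - A)) < real N"
    by (simp add: field_simps)
  then show ?thesis
    by (simp only: of_nat_less_iff)
qed

theorem theorem2p1:
  fixes l n :: nat and A :: "nat set"
  assumes "l > 0" and "n > 0" and "2 ^ l \<le> n"
    and "A \<subseteq> {..<2 ^ n}"
    and "real (card A) > (1 - 1 / 2 ^ l) * (2::real) ^ n"
  shows "\<exists>x y. x < 2 ^ n \<and> y < 2 ^ n \<and>
           sigma_star (2 ^ n) (replicate (2 ^ l - 1) x @ [y]) \<subseteq> A"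
proof -
  have "l \<le> n" \<comment> \<open>all that is needed of the hypothesis 2^l \<le> n\<close>
    using assms(3) less_exp[of l] by linarith
  define B where "B = {..<(2::nat) ^ n} - A"
  have B: "B \<subseteq> {..<2 ^ n}" "finite B" "2 ^ l * card B < 2 ^ n"
    using card_complement_less_of_dense[of A "2 ^ n" l] assms(4,5) unfolding B_def by auto
  obtain x where x: "x < 2 ^ n" "\<forall>j \<in> {1..<2 ^ l}. (j * x) mod 2 ^ n \<notin> B"
    using exists_odd_multiplier_avoiding[OF assms(1) \<open>l \<le> n\<close> B(1,3)] by blast
  obtain y where y: "y < 2 ^ n" "\<forall>j < 2 ^ l. (y + j * x) mod 2 ^ n \<notin> B"
    using exists_shift_avoiding[OF B(2,3), of "\<lambda>j. j * x"] by blast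
  have "0 < (2::nat) ^ l" by simp
  then have "j < 2 ^ l" if "j \<le> 2 ^ l - 1" for j :: nat
    using that by linarith
  then have "sigma_star (2 ^ n) (replicate (2 ^ l - 1) x @ [y]) \<subseteq> A"
    unfolding sigma_star_replicate_snoc using x(2) y(2) by (auto simp: B_def)
  with x(1) y(1) show ?thesis by blast
qed

end
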